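(* Consider the model and approximate SIR in the context with perfect coordination $p=0$ (so $\Omega=0$ almost surely) and $q\in(0,1]$. Then $$\mathbb{P}\left(\widetilde{\mathsf{SIR}}_L\ge\frac{\beta}{\gamma}\right)=1-\sum_{\ell=0}^{L-1}e^{-\frac{\alpha-2}{2q\beta/\gamma}}\frac{\left(\frac{\alpha-2}{2q\beta/\gamma}\right)^\ell}{\ell!}.$$
   Context: Let $\Phi$ be a homogeneous Poisson point process on $\mathbb{R}^2$ of intensity $\lambda>0$ (base station locations), user at the origin $o$; label the points in increasing distance as $x_1,x_2,\dots$ and set $R_L=\|x_L\|$ for a fixed integer $L\ge1$. Fix $\alpha>2$, $\gamma>0$, $\beta>0$, $q\in(0,1]$. With all other participating BSs silent, the approximate (interference-limited) SIR of the $L$-th BS, in which the interference from BSs beyond $x_L$ (each active with probability $q$) is replaced by its conditional mean given $R_L$, is $\widetilde{\mathsf{SIR}}_L=\frac{R_L^{-\alpha}}{\frac{2\pi q\lambda}{\alpha-2}R_L^{2-\alpha}}$. *)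

theory Defs
  imports "HOL-Probability.Probability"
begin

text \<open>The plane R^2 is modelled by the type complex (2-dimensional Euclidean space),
  with Lebesgue measure lborel.\<close>

definition count_in :: "('w \<Rightarrow> complex set) \<Rightarrow> complex set \<Rightarrow> 'w \<Rightarrow> nat" where
  "count_in Phi A w = card (Phi w \<inter> A)"

definition is_PPP :: "'w measure \<Rightarrow> ('w \<Rightarrow> complex set) \<Rightarrow> real \<Rightarrow> bool" where
  "is_PPP M Phi lam \<longleftrightarrow>
     prob_space M \<and>
     (\<forall>A. A \<in> sets borel \<and> bounded A \<longrightarrow>
        (\<forall>w\<in>space M. finite (Phi w \<inter> A)) \<and>
        count_in Phi A \<in> measurable M (count_space UNIV) \<and>
        (\<forall>k::nat. measure M {w \<in> space M. count_in Phi A w = k}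
            = (lam * measure lborel A) ^ k / fact k * exp (- (lam * measure lborel A)))) \<and>
     (\<forall>(I::nat set) As. finite I \<and> disjoint_family_on As I \<and>
        (\<forall>i\<in>I. As i \<in> sets borel \<and> bounded (As i)) \<longrightarrow>
        prob_space.indep_vars M (\<lambda>_. count_space UNIV) (\<lambda>i. count_in Phi (As i)) I)"

definition R_L :: "('w \<Rightarrow> complex set) \<Rightarrow> nat \<Rightarrow> 'w \<Rightarrow> real" where
  "R_L Phi L w = Inf {r. 0 \<le> r \<and> L \<le> card (Phi w \<inter> cball 0 r)}"

text \<open>Approximate (interference-limited) SIR of the L-th BS, given R = R_L.\<close>

definition SIR_approx :: "real \<Rightarrow> real \<Rightarrow> real \<Rightarrow> real \<Rightarrow> real" where
  "SIR_approx lam q alpha R =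
     R powr (- alpha) / (2 * pi * q * lam / (alpha - 2) * R powr (2 - alpha))"

end

(*
  For R > 0 the approximate SIR equals (alpha - 2) / (2 pi q lam R^2), and it vanishes at R = 0.
  Hence the event is 0 < R_L <= r0 with lam pi r0^2 = mu := (alpha - 2) gamma / (2 q beta).
  Almost surely the origin carries no point and the configuration has at least L points, so
  R_L > 0 and {R_L <= r0} = {N(cball 0 r0) >= L}; the count is Poisson with mean mu, which
  gives 1 minus the Poisson lower tail.
*)
theory Submission
  imports Defs "HOL-Real_Asymp.Real_Asymp"
begin

definition poisson_lower_tail :: "real \<Rightarrow> nat \<Rightarrow> real" where
  "poisson_lower_tail \<mu> L = (\<Sum>k<L. exp (- \<mu>) * \<mu> ^ k / fact k)"

lemma poisson_lower_tail_0: "L \<ge> 1 \<Longrightarrow> poisson_lower_tail 0 L = 1"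
  by (cases L) (simp_all add: poisson_lower_tail_def sum.lessThan_Suc_shift del: sum.lessThan_Suc)

lemma poisson_lower_tail_tendsto_0: "((\<lambda>\<mu>. poisson_lower_tail \<mu> L) \<longlongrightarrow> 0) at_top"
  unfolding poisson_lower_tail_def
proof (rule tendsto_null_sum)
  fix k
  have "((\<lambda>\<mu>::real. \<mu> ^ k / exp \<mu> / fact k) \<longlongrightarrow> 0 / fact k) at_top"
    by (intro tendsto_divide tendsto_power_div_exp_0) auto
  moreover have "(\<lambda>\<mu>::real. \<mu> ^ k / exp \<mu> / fact k) = (\<lambda>\<mu>. exp (- \<mu>) * \<mu> ^ k / fact k)"
    by (simp add: exp_minus field_simps)
  ultimately show "((\<lambda>\<mu>::real. exp (- \<mu>) * \<mu> ^ k / fact k) \<longlongrightarrow> 0) at_top"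
    by simp
qed

lemma measure_cball_complex: "r \<ge> 0 \<Longrightarrow> measure lborel (cball (x::complex) r) = pi * r\<^sup>2"
  using content_cball[of r x] by (simp add: unit_ball_vol_2)

lemma eventually_cball_inter_eq_at_right:
  fixes P :: "'a::metric_space set"
  assumes "finite (P \<inter> cball x b)" and "a < b"
  shows "\<forall>\<^sub>F r in at_right a. P \<inter> cball x r = P \<inter> cball x a"
proof -
  define F where "F = P \<inter> cball x b - cball x a"
  have "finite F" using assms(1) by (simp add: F_def)
  moreover have "\<forall>y\<in>F. \<forall>\<^sub>F r in at_right a. r < dist x y"
    by (auto simp: F_def intro!: order_tendstoD(2)[OF tendsto_ident_at])
  ultimately have "\<forall>\<^sub>F r in at_right a. \<forall>y\<in>F. r < dist x y"
    by (rule eventually_ball_finite)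
  moreover have "\<forall>\<^sub>F r in at_right a. a < r \<and> r < b"
    using assms(2) by (auto simp: eventually_at_right_field)
  ultimately show ?thesis
  proof eventually_elim
    case (elim r)
    then have "y \<in> cball x a" if "y \<in> P" "dist x y \<le> r" for y
      using that by (force simp: F_def)
    with elim show ?case by auto
  qed
qed

lemma SIR_approx_ge_iff:
  fixes lam q alpha t R :: real
  assumes "lam > 0" "alpha > 2" "q > 0" "t > 0" "R \<ge> 0"
  shows "SIR_approx lam q alpha R \<ge> t \<longleftrightarrow>
     0 < R \<and> R \<le> sqrt ((alpha - 2) / (2 * pi * q * lam * t))"
proof (cases "R = 0")
  case True
  then show ?thesis using assms by (simp add: SIR_approx_def)
next
  case False
  define c where "c = 2 * pi * q * lam / (alpha - 2)"
  have c: "c > 0" using assms by (simp add: c_def)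
  have R: "R > 0" using False assms by simp
  have "R powr (2 - alpha) = R\<^sup>2 * R powr (- alpha)"
    using R by (simp add: powr_diff powr_minus_divide powr_numeral)
  then have "SIR_approx lam q alpha R = 1 / (c * R\<^sup>2)"
    using R by (simp add: SIR_approx_def c_def)
  also have "t \<le> 1 / (c * R\<^sup>2) \<longleftrightarrow> R\<^sup>2 \<le> 1 / (c * t)"
    using R c assms by (simp add: divide_le_eq le_divide_eq algebra_simps)
  also have "\<dots> \<longleftrightarrow> R \<le> sqrt (1 / (c * t))"
    using R by (simp add: real_le_rsqrt real_sqrt_le_iff flip: real_sqrt_le_iff[of "R\<^sup>2"])
  finally show ?thesis using R assms by (simp add: c_def)
qed

lemma R_L_nonneg:
  assumes "\<exists>r\<ge>0. L \<le> card (Phi w \<inter> cball 0 r)"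
  shows "0 \<le> R_L Phi L w"
  using assms unfolding R_L_def by (intro cInf_greatest) auto

text \<open>With fewer than L points in the whole plane, R_L is the unspecified value Inf {};
  this happens only on a null set.\<close>

lemma R_L_eq_Inf_empty:
  assumes "\<not> (\<exists>r\<ge>0. L \<le> card (Phi w \<inter> cball 0 r))"
  shows "R_L Phi L w = Inf {}"
  using assms unfolding R_L_def by (metis (mono_tags, lifting) Collect_empty_eq)

text \<open>The infimum defining R_L is attained, since r \<mapsto> Phi w \<inter> cball 0 r is
  constant on a right neighbourhood of every radius.\<close>

lemma R_L_le_iff:
  assumes fin: "\<And>r. finite (Phi w \<inter> cball 0 r)"
    and ex: "\<exists>r\<ge>0. L \<le> card (Phi w \<inter> cball 0 r)" and "0 \<le> a"
  shows "R_L Phi L w \<le> a \<longleftrightarrow> L \<le> card (Phi w \<inter> cball 0 a)"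
proof
  let ?S = "{r. 0 \<le> r \<and> L \<le> card (Phi w \<inter> cball 0 r)}"
  have ne: "?S \<noteq> {}" and bdd: "bdd_below ?S"
    using ex by (auto intro: bdd_belowI[of _ 0])
  assume le: "R_L Phi L w \<le> a"
  have "\<forall>\<^sub>F r in at_right a. Phi w \<inter> cball 0 r = Phi w \<inter> cball 0 a"
    by (rule eventually_cball_inter_eq_at_right[OF fin, of _ "a + 1"]) simp
  then have "\<forall>\<^sub>F r in at_right a. Inf ?S < r \<and> Phi w \<inter> cball 0 r = Phi w \<inter> cball 0 a"
    using eventually_at_right_less by eventually_elim (use le in \<open>auto simp: R_L_def\<close>)
  then obtain r where r: "Inf ?S < r" "Phi w \<inter> cball 0 r = Phi w \<inter> cball 0 a"
    using eventually_happens' trivial_limit_at_right_real by blast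
  then obtain s where s: "s \<in> ?S" "s < r"
    using cInf_less_iff[OF ne bdd] by blast
  have "card (Phi w \<inter> cball 0 s) \<le> card (Phi w \<inter> cball 0 r)"
    using s(2) by (intro card_mono[OF fin]) auto
  with s(1) r(2) show "L \<le> card (Phi w \<inter> cball 0 a)" by simp
next
  assume "L \<le> card (Phi w \<inter> cball 0 a)"
  then show "R_L Phi L w \<le> a"
    unfolding R_L_def using \<open>0 \<le> a\<close> by (intro cInf_lower) (auto intro: bdd_belowI[of _ 0])
qed

locale homogeneous_PPP =
  fixes M :: "'w measure" and Phi :: "'w \<Rightarrow> complex set" and lam :: real
  assumes is_PPP: "is_PPP M Phi lam"
begin

sublocale prob_space M
  using is_PPP by (simp add: is_PPP_def)

lemma count_cball_law:
  "(\<forall>w\<in>space M. finite (Phi w \<inter> cball 0 r)) \<and>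
   count_in Phi (cball 0 r) \<in> measurable M (count_space UNIV) \<and>
   (\<forall>k. prob {w \<in> space M. count_in Phi (cball 0 r) w = k}
      = (lam * measure lborel (cball (0::complex) r)) ^ k / fact k
        * exp (- (lam * measure lborel (cball (0::complex) r))))"
proof -
  have "cball (0::complex) r \<in> sets borel" "bounded (cball (0::complex) r)"
    by auto
  then show ?thesis
    using is_PPP unfolding is_PPP_def by blast
qed

lemma finite_cball: "w \<in> space M \<Longrightarrow> finite (Phi w \<inter> cball 0 r)"
  using count_cball_law by blast

lemma measurable_count_cball [measurable]:
  "count_in Phi (cball 0 r) \<in> measurable M (count_space UNIV)"
  using count_cball_law by blast

lemma prob_count_cball_less:
  assumes "r \<ge> 0"
  shows "prob {w \<in> space M. count_in Phi (cball 0 r) w < L}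
    = poisson_lower_tail (lam * pi * r\<^sup>2) L"
proof -
  have "{w \<in> space M. count_in Phi (cball 0 r) w < L}
      = (\<Union>k<L. {w \<in> space M. count_in Phi (cball 0 r) w = k})"
    by auto
  moreover have "{w \<in> space M. count_in Phi (cball 0 r) w = k} \<in> events" for k
    by measurable
  ultimately have "prob {w \<in> space M. count_in Phi (cball 0 r) w < L}
      = (\<Sum>k<L. prob {w \<in> space M. count_in Phi (cball 0 r) w = k})"
    by (auto simp: disjoint_family_on_def intro: finite_measure_finite_Union)
  also have "\<dots> = poisson_lower_tail (lam * pi * r\<^sup>2) L"
    unfolding poisson_lower_tail_def
  proof (rule sum.cong)
    fix k
    show "prob {w \<in> space M. count_in Phi (cball 0 r) w = k}
        = exp (- (lam * pi * r\<^sup>2)) * (lam * pi * r\<^sup>2) ^ k / fact k"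
      using count_cball_law[of r]
      by (simp only: measure_cball_complex[OF assms]) (simp add: mult_ac)
  qed simp
  finally show ?thesis .
qed

lemma ex_count_cball_ge_iff:
  assumes "w \<in> space M"
  shows "(\<exists>r\<ge>0. L \<le> card (Phi w \<inter> cball 0 r)) \<longleftrightarrow>
    (\<exists>n::nat. L \<le> count_in Phi (cball 0 (real n)) w)"
proof
  assume "\<exists>r\<ge>0. L \<le> card (Phi w \<inter> cball 0 r)"
  then obtain r n where r: "L \<le> card (Phi w \<inter> cball 0 r)" and n: "r \<le> real n"
    using real_arch_simple by blast
  have "card (Phi w \<inter> cball 0 r) \<le> card (Phi w \<inter> cball 0 (real n))"
    using n by (intro card_mono finite_cball assms) auto
  with r show "\<exists>n::nat. L \<le> count_in Phi (cball 0 (real n)) w"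
    unfolding count_in_def by (meson le_trans)
qed (metis count_in_def of_nat_0_le_iff)

lemma AE_count_cball_ge:
  assumes "lam > 0"
  shows "AE w in M. \<exists>n::nat. L \<le> count_in Phi (cball 0 (real n)) w"
proof (rule AE_I')
  define Few where "Few = {w \<in> space M. \<forall>n::nat. count_in Phi (cball 0 (real n)) w < L}"
  have "Few \<in> events"
    unfolding Few_def by measurable
  have "prob Few \<le> poisson_lower_tail (lam * pi * (real n)\<^sup>2) L" for n
  proof -
    have "prob Few \<le> prob {w \<in> space M. count_in Phi (cball 0 (real n)) w < L}"
      by (rule finite_measure_mono) (auto simp: Few_def)
    then show ?thesis
      by (simp add: prob_count_cball_less)
  qed
  moreover have "(\<lambda>n::nat. poisson_lower_tail (lam * pi * (real n)\<^sup>2) L) \<longlonglongrightarrow> 0"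
    by (rule filterlim_compose[OF poisson_lower_tail_tendsto_0]) (use assms in real_asymp)
  ultimately have "prob Few \<le> 0"
    by (intro LIMSEQ_le_const) auto
  with \<open>Few \<in> events\<close> show "Few \<in> null_sets M"
    by (simp add: null_setsI emeasure_eq_measure measure_le_0_iff)
  show "{w \<in> space M. \<not> (\<exists>n::nat. L \<le> count_in Phi (cball 0 (real n)) w)} \<subseteq> Few"
    by (auto simp: Few_def not_le)
qed

lemma AE_count_origin_less:
  assumes "L \<ge> 1"
  shows "AE w in M. count_in Phi (cball 0 0) w < L"
proof -
  have "prob {w \<in> space M. count_in Phi (cball 0 0) w < L} = 1"
    using prob_count_cball_less[of 0] poisson_lower_tail_0[OF assms] by simp
  then show ?thesis
    by (auto dest: AE_prob_1)
qed

lemma borel_measurable_R_L [measurable]: "R_L Phi L \<in> borel_measurable M"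
proof (rule borel_measurableI_le)
  fix a
  have R_L_le: "R_L Phi L w \<le> a \<longleftrightarrow>
      (if \<exists>n::nat. L \<le> count_in Phi (cball 0 (real n)) w
       then 0 \<le> a \<and> L \<le> count_in Phi (cball 0 a) w else Inf {} \<le> a)"
    if w: "w \<in> space M" for w
  proof (cases "\<exists>n::nat. L \<le> count_in Phi (cball 0 (real n)) w")
    case True
    then have ex: "\<exists>r\<ge>0. L \<le> card (Phi w \<inter> cball 0 r)"
      using ex_count_cball_ge_iff[OF w] by blast
    show ?thesis
      using True R_L_le_iff[where Phi = Phi and w = w, OF finite_cball[OF w] ex]
        R_L_nonneg[where Phi = Phi and w = w, OF ex]
      by (cases "0 \<le> a") (auto simp: count_in_def)
  next
    case False
    then have "R_L Phi L w = Inf {}"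
      using ex_count_cball_ge_iff[OF w] by (intro R_L_eq_Inf_empty) blast
    with False show ?thesis
      by simp
  qed
  have "{w \<in> space M. R_L Phi L w \<le> a} =
    {w \<in> space M. if \<exists>n::nat. L \<le> count_in Phi (cball 0 (real n)) w
                   then 0 \<le> a \<and> L \<le> count_in Phi (cball 0 a) w else Inf {} \<le> a}"
    using R_L_le by blast
  also have "\<dots> \<in> sets M"
    by measurable
  finally show "{w \<in> space M. R_L Phi L w \<le> a} \<in> sets M" .
qed

end

theorem proposition1:
  fixes M :: "'w measure" and Phi :: "'w \<Rightarrow> complex set"
    and lam alpha gamma beta q :: real and L :: nat
  assumes "is_PPP M Phi lam" and "lam > 0" and "alpha > 2" and "gamma > 0" and "beta > 0"
    and "0 < q" and "q \<le> 1" and "L \<ge> 1"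
  shows "measure M {w \<in> space M. SIR_approx lam q alpha (R_L Phi L w) \<ge> beta / gamma}
    = 1 - (\<Sum>l<L. exp (- ((alpha - 2) / (2 * q * beta / gamma)))
              * ((alpha - 2) / (2 * q * beta / gamma)) ^ l / fact l)"
proof -
  interpret homogeneous_PPP M Phi lam
    using assms(1) by unfold_locales
  define t where "t = beta / gamma"
  define r0 where "r0 = sqrt ((alpha - 2) / (2 * pi * q * lam * t))"
  have t: "t > 0" and r0: "r0 \<ge> 0"
    using assms by (simp_all add: t_def r0_def)
  have "AE w in M.
      SIR_approx lam q alpha (R_L Phi L w) \<ge> t \<longleftrightarrow> L \<le> count_in Phi (cball 0 r0) w"
    using AE_space AE_count_cball_ge[OF assms(2), of L] AE_count_origin_less[OF assms(8)]
  proof eventually_elim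
    case (elim w)
    then have ex: "\<exists>r\<ge>0. L \<le> card (Phi w \<inter> cball 0 r)"
      using ex_count_cball_ge_iff by blast
    note R_L_le = R_L_le_iff[where Phi = Phi and w = w, OF finite_cball[OF elim(1)] ex]
    show ?case
      using SIR_approx_ge_iff[OF assms(2,3,6) t R_L_nonneg[where Phi = Phi and w = w, OF ex]]
        R_L_le[OF r0] R_L_le[of 0] elim(3)
      by (auto simp: r0_def count_in_def)
  qed
  moreover have "{w \<in> space M. SIR_approx lam q alpha (R_L Phi L w) \<ge> t} \<in> events"
    unfolding SIR_approx_def by measurable
  moreover have "{w \<in> space M. L \<le> count_in Phi (cball 0 r0) w} \<in> events"
    by measurable
  ultimately have "prob {w \<in> space M. SIR_approx lam q alpha (R_L Phi L w) \<ge> t}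
      = prob {w \<in> space M. L \<le> count_in Phi (cball 0 r0) w}"
    by (rule prob_eq_AE)
  also have "\<dots> = 1 - prob {w \<in> space M. count_in Phi (cball 0 r0) w < L}"
    by (subst prob_compl[symmetric]) (auto intro!: arg_cong[where f = prob])
  also have "\<dots> = 1 - poisson_lower_tail (lam * pi * r0\<^sup>2) L"
    by (simp add: prob_count_cball_less r0)
  also have "lam * pi * r0\<^sup>2 = (alpha - 2) / (2 * q * beta / gamma)"
    using assms by (simp add: r0_def t_def)
  finally show ?thesis
    by (simp add: t_def poisson_lower_tail_def)
qed

end
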